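(* Let $t,a_1,\dots,a_n\in\mathbb{C}$ and \[P(x,y)=\prod_{i=1}^n\big((x-a_i)^2-y\big)+t\in\mathbb{C}[x,y].\] If the $a_i$ are pairwise distinct and $t\neq 0$, then $P(x,y)$ is irreducible in $\mathbb{C}[x,y]$. *)

theory Defs
  imports "HOL-Computational_Algebra.Polynomial_Factorial"
begin

text \<open>We model C[x,y] as (C[x])[y], i.e. the type complex poly poly:
  the outer variable is y, the coefficients are polynomials in x.
  The polynomial P(x,y) = prod_{i=1}^n ((x - a_i)^2 - y) + t.\<close>

definition bivP :: "nat \<Rightarrow> (nat \<Rightarrow> complex) \<Rightarrow> complex \<Rightarrow> complex poly poly" where
  "bivP n a t = (\<Prod>i = 1..n. [: [:- a i, 1:] ^ 2, -1 :]) + [: [: t :] :]"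

end

theory Submission
  imports Defs
begin

text \<open>Let \<open>P = G H\<close> with \<open>k = deg\<^sub>y G \<le> n/2\<close>. The leading \<open>y\<close>-coefficients of \<open>G\<close> and
  \<open>H\<close> are nonzero constants, as their product is \<open>\<plusminus>1\<close>. On each parabola \<open>y = (x - a\<^sub>i)\<^sup>2\<close>
  the polynomial \<open>P\<close> takes the constant value \<open>t \<noteq> 0\<close>, so \<open>G\<close> is constant there as well.
  For fixed \<open>x\<close>, the map \<open>b \<mapsto> G(x, (x - b)\<^sup>2)\<close> is a polynomial of degree \<open>2k \<le> n\<close>
  whose leading coefficient does not depend on \<open>x\<close>; two of them agree at the \<open>n\<close> points
  \<open>a\<^sub>i\<close>, hence coincide. So \<open>G\<close> is constant on every parabola \<open>y = (x - b)\<^sup>2\<close>, and since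
  the parabolas with vertices \<open>b\<close> and \<open>b'\<close> meet at \<open>x = (b + b')/2\<close>, \<open>G\<close> is constant,
  i.e.\ \<open>k = 0\<close>.\<close>

definition eval_x :: "'a::comm_semiring_1 poly poly \<Rightarrow> 'a \<Rightarrow> 'a poly" where
  "eval_x G x = map_poly (\<lambda>p. poly p x) G"

lemma coeff_eval_x: "coeff (eval_x G x) i = poly (coeff G i) x"
  by (simp add: eval_x_def coeff_map_poly)

lemma poly_eval_x: "poly (poly G q) x = poly (eval_x G x) (poly q x)"
  by (induction G) (simp_all add: eval_x_def map_poly_pCons)

lemma
  fixes G :: "'a::comm_semiring_1 poly poly"
  assumes "lead_coeff G = [:c:]" "c \<noteq> 0"
  shows degree_eval_x: "degree (eval_x G x) = degree G"
    and lead_coeff_eval_x: "lead_coeff (eval_x G x) = c"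
proof -
  have "degree (eval_x G x) \<le> degree G"
    by (rule degree_le) (simp add: coeff_eval_x coeff_eq_0)
  moreover have "coeff (eval_x G x) (degree G) = c"
    using assms(1) by (simp add: coeff_eval_x)
  ultimately show "degree (eval_x G x) = degree G"
    using assms(2) by (metis le_antisym le_degree)
  then show "lead_coeff (eval_x G x) = c"
    using \<open>coeff (eval_x G x) (degree G) = c\<close> by simp
qed

lemma parabola_values_eq:
  fixes G :: "'a::idom poly poly"
  assumes lc: "lead_coeff G = [:c:]" "c \<noteq> 0"
    and card: "2 * degree G \<le> card A"
    and const: "\<And>a x1 x2. a \<in> A \<Longrightarrow>
      poly (eval_x G x1) ((x1 - a)^2) = poly (eval_x G x2) ((x2 - a)^2)"
  shows "poly (eval_x G x1) ((x1 - b)^2) = poly (eval_x G x2) ((x2 - b)^2)"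
proof -
  define R where "R x = pcompose (eval_x G x) ([:x, -1:] ^ 2)" for x
  have poly_R: "poly (R x) b = poly (eval_x G x) ((x - b)^2)" for x b
    by (simp add: R_def poly_pcompose)
  have sq: "degree ([:x, -1:] ^ 2) = 2" "lead_coeff ([:x, -1:] ^ 2) = 1" for x :: 'a
    by (simp_all add: degree_power_eq lead_coeff_power)
  have degree_R: "degree (R x) = 2 * degree G" for x
    using sq by (simp add: R_def degree_pcompose degree_eval_x[OF lc])
  have lead_coeff_R: "lead_coeff (R x) = c" for x
    unfolding R_def using sq by (subst lead_coeff_comp) (simp_all add: lead_coeff_eval_x[OF lc])
  have "R x1 = R x2"
  proof (rule poly_eqI_degree_lead_coeff[where n = "2 * degree G" and A = A])
    show "coeff (R x1) (2 * degree G) = coeff (R x2) (2 * degree G)"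
      using lead_coeff_R degree_R by metis
    show "poly (R x1) a = poly (R x2) a" if "a \<in> A" for a
      using const[OF that] by (simp add: poly_R)
  qed (use card degree_R in auto)
  then show ?thesis
    by (metis poly_R)
qed

lemma const_if_const_on_parabolas:
  fixes f :: "complex \<Rightarrow> complex \<Rightarrow> complex"
  assumes parabola: "\<And>x1 x2 b. f x1 ((x1 - b)^2) = f x2 ((x2 - b)^2)"
  shows "f x y = f 0 0"
proof -
  define b where "b = x - csqrt y"
  \<comment> \<open>Pass from the parabola with vertex \<open>b\<close> to the one with vertex \<open>0\<close> through \<open>x = b/2\<close>.\<close>
  have "f x y = f x ((x - b)^2)"
    by (simp add: b_def power2_csqrt)
  also have "\<dots> = f 0 ((0 - b)^2)"
    by (rule parabola)
  also have "\<dots> = f (b/2) ((b/2 - b)^2)"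
    by (rule parabola)
  also have "(b/2 - b)^2 = (b/2 - 0)^2"
    by (simp add: power2_eq_square field_simps)
  also have "f (b/2) \<dots> = f 0 ((0 - 0)^2)"
    by (rule parabola)
  finally show ?thesis
    by simp
qed

lemma degree_eq_0_if_poly_eval_x_const:
  fixes G :: "'a::{idom,ring_char_0} poly poly"
  assumes "lead_coeff G = [:c:]" "c \<noteq> 0"
    and "\<And>y. poly (eval_x G x) y = d"
  shows "degree G = 0"
proof -
  have "eval_x G x = [:d:]"
    using assms(3) by (intro poly_eq_poly_eq_iff[THEN iffD1]) auto
  then show ?thesis
    using degree_eval_x[OF assms(1,2), of x] by simp
qed

lemma degree_bivP: "degree (bivP n a t) = n"
  and lead_coeff_bivP: "lead_coeff (bivP n a t) = [:(-1)^n:]" if "n \<ge> 1"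
proof -
  define F where "F = (\<Prod>i = 1..n. [: [:- a i, 1:] ^ 2, -1 :])"
  have "degree F = n"
    by (simp add: F_def degree_prod_eq_sum_degree)
  then have "degree [:[:t:]:] < degree F"
    using that by simp
  moreover have "lead_coeff F = [:(-1)^n:]"
    by (simp add: F_def lead_coeff_prod one_pCons flip: poly_const_pow)
  moreover have "bivP n a t = F + [:[:t:]:]"
    by (simp add: bivP_def F_def)
  ultimately show "degree (bivP n a t) = n" "lead_coeff (bivP n a t) = [:(-1)^n:]"
    using \<open>degree F = n\<close> by (simp_all add: degree_add_eq_left coeff_eq_0)
qed

lemma is_unit_lead_coeff_bivP:
  assumes "n \<ge> 1"
  shows "is_unit (lead_coeff (bivP n a t))"
  by (simp add: lead_coeff_bivP[OF assms] is_unit_const_poly_iff dvd_field_iff)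

lemma poly_bivP_parabola:
  assumes "i \<in> {1..n}"
  shows "poly (bivP n a t) ([:- a i, 1:] ^ 2) = [:t:]"
proof -
  have "poly (\<Prod>j = 1..n. [: [:- a j, 1:] ^ 2, -1 :]) ([:- a i, 1:] ^ 2) = 0"
    unfolding poly_prod using assms by (intro prod_zero) auto
  then show ?thesis
    by (simp add: bivP_def)
qed

lemma is_unit_lead_coeff_factor:
  fixes G H :: "'a::algebraic_semidom poly"
  assumes "is_unit (lead_coeff (G * H))"
  shows "is_unit (lead_coeff G)"
  using assms by (simp add: lead_coeff_mult is_unit_mult_iff)

lemma degree_eq_0_if_small_factor_bivP:
  assumes inj: "inj_on a {1..n}" and "t \<noteq> 0" "n \<ge> 1"
    and factor: "bivP n a t = G * H" and small: "2 * degree G \<le> n"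
  shows "degree G = 0"
proof -
  have "is_unit (lead_coeff G)"
    using is_unit_lead_coeff_factor[of G H] is_unit_lead_coeff_bivP[OF \<open>n \<ge> 1\<close>, of a t]
    by (simp add: factor)
  then obtain c where lc: "lead_coeff G = [:c:]" "c \<noteq> 0"
    by (auto simp: is_unit_poly_iff dvd_field_iff)
  have on_parabola: "poly (eval_x G x1) ((x1 - a i)^2) = poly (eval_x G x2) ((x2 - a i)^2)"
    if i: "i \<in> {1..n}" for i x1 x2
  proof -
    let ?q = "[:- a i, 1:] ^ 2"
    have "poly G ?q * poly H ?q = [:t:]"
      using poly_bivP_parabola[OF i, of a t] by (simp add: factor)
    then have "is_unit (poly G ?q)"
      using \<open>t \<noteq> 0\<close> by (metis is_unit_mult_iff is_unit_const_poly_iff dvd_field_iff)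
    then obtain d where d: "poly G ?q = [:d:]"
      by (auto simp: is_unit_poly_iff)
    have "poly (eval_x G x) ((x - a i)^2) = d" for x
      using poly_eval_x[of G ?q x] by (simp add: d)
    then show ?thesis
      by simp
  qed
  have "poly (eval_x G x1) ((x1 - b)^2) = poly (eval_x G x2) ((x2 - b)^2)" for x1 x2 b
  proof (rule parabola_values_eq[OF lc])
    show "2 * degree G \<le> card (a ` {1..n})"
      using small inj by (simp add: card_image)
  next
    fix a' x1 x2
    assume "a' \<in> a ` {1..n}"
    then show "poly (eval_x G x1) ((x1 - a')^2) = poly (eval_x G x2) ((x2 - a')^2)"
      using on_parabola by blast
  qed
  then have "poly (eval_x G 0) y = poly (eval_x G 0) 0" for y
    using const_if_const_on_parabolas[of "\<lambda>x. poly (eval_x G x)"] by blast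
  then show ?thesis
    by (rule degree_eq_0_if_poly_eval_x_const[OF lc])
qed

lemma is_unit_small_factor_bivP:
  assumes "inj_on a {1..n}" "t \<noteq> 0" "n \<ge> 1"
    and factor: "bivP n a t = G * H" and "2 * degree G \<le> n"
  shows "is_unit G"
proof -
  obtain c where "G = [:c:]"
    using degree_eq_0_if_small_factor_bivP[OF assms] by (rule degree_eq_zeroE)
  then show ?thesis
    using is_unit_lead_coeff_factor[of G H] is_unit_lead_coeff_bivP[OF \<open>n \<ge> 1\<close>, of a t]
    by (simp add: factor is_unit_const_poly_iff)
qed

theorem mainTheorem2:
  fixes n :: nat and a :: "nat \<Rightarrow> complex" and t :: complex
  assumes "n \<ge> 1"
    and "inj_on a {1..n}"
    and "t \<noteq> 0"
  shows "irreducible (bivP n a t)"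
proof (rule irreducibleI)
  have degree: "degree (bivP n a t) = n"
    by (rule degree_bivP[OF assms(1)])
  then show nonzero: "bivP n a t \<noteq> 0" and "\<not> is_unit (bivP n a t)"
    using assms(1) by (auto simp: is_unit_poly_iff)
  fix G H
  assume factor: "bivP n a t = G * H"
  then have "degree G + degree H = n"
    using degree nonzero by (metis degree_mult_eq mult_eq_0_iff)
  then consider "2 * degree G \<le> n" | "2 * degree H \<le> n"
    by linarith
  then show "is_unit G \<or> is_unit H"
    using is_unit_small_factor_bivP[OF assms(2,3,1)] factor by (cases; metis mult.commute)
qed

end
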